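(* Let $q\in\mathbb{N}$, $q\ge1$, and let $F=(n_F)_{n\ge0}$ be defined by $0_F=0$, $1_F=1$, $2_F=q$, and $(j+2)_F=q\,(j+1)_F+j_F$ for $j\ge0$ (e.g. $q=2$ gives $1,2,5,12,29,70,\dots$ and $q=3$ gives $1,3,10,33,109,\dots$ from $n=1$). Then for all integers $0\le k<n$, the layer $\langle\Phi_{k+1}\to\Phi_n\rangle$ of the cobweb poset of $F$ (with $m=n-k$ levels) admits a tiling by blocks of type $\sigma P_m$.
   Context: Notation: $n_F\equiv F_n$. The cobweb poset of $F$ has, for each $s\ge1$, a level $\Phi_s$ consisting of $s_F$ distinct vertices (levels pairwise disjoint), plus a root level $\Phi_0$ with one vertex; for $x\in\Phi_i$, $y\in\Phi_j$ one has $x<y$ iff $i<j$. For $1\le a\le b$, the layer $\langle\Phi_a\to\Phi_b\rangle$ is the subposet on $\Phi_a\cup\dots\cup\Phi_b$; it has $m=b-a+1$ levels and its maximal chains form the set $\Phi_a\times\dots\times\Phi_b$. For a permutation $\sigma$ of $\{1,\dots,m\}$, a block of type $\sigma P_m$ in this layer is the subposet induced on $V_a\cup\dots\cup V_b$ where $V_{a-1+i}\subseteq\Phi_{a-1+i}$ and $|V_{a-1+i}|=\sigma(i)_F$ for $i=1,\dots,m$; its maximal chains form the set $V_a\times\dots\times V_b$. A tiling of the layer is a finite family of such blocks ($\sigma$ may vary from block to block) whose sets $V_a\times\dots\times V_b$ partition $\Phi_a\times\dots\times\Phi_b$ (pairwise max-disjoint and covering all maximal chains). *)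

theory Defs
  imports "HOL-Combinatorics.Permutations" "HOL-Library.FuncSet"
begin

fun Fq :: "nat \<Rightarrow> nat \<Rightarrow> nat" where
  "Fq q 0 = 0"
| "Fq q (Suc 0) = 1"
| "Fq q (Suc (Suc j)) = q * Fq q (Suc j) + Fq q j"

text \<open>Level Phi_s of the cobweb poset of F (s >= 1): s_F vertices, modelled as
  the indices 0..s_F-1 (levels are disjoint since a vertex is tagged by its level).\<close>
definition cobweb_level :: "(nat \<Rightarrow> nat) \<Rightarrow> nat \<Rightarrow> nat set" where
  "cobweb_level F s = {..<F s}"

definition layer_max_chains :: "(nat \<Rightarrow> nat) \<Rightarrow> nat \<Rightarrow> nat \<Rightarrow> (nat \<Rightarrow> nat) set" where
  "layer_max_chains F a b = (\<Pi>\<^sub>E s\<in>{a..b}. cobweb_level F s)"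

definition is_block :: "(nat \<Rightarrow> nat) \<Rightarrow> nat \<Rightarrow> nat \<Rightarrow> (nat \<Rightarrow> nat set) \<Rightarrow> bool" where
  "is_block F a b V \<longleftrightarrow>
     (\<exists>\<sigma>. \<sigma> permutes {1..b - a + 1} \<and>
        (\<forall>i\<in>{1..b - a + 1}. V (a - 1 + i) \<subseteq> cobweb_level F (a - 1 + i) \<and>
                              card (V (a - 1 + i)) = F (\<sigma> i)))"

definition block_chains :: "nat \<Rightarrow> nat \<Rightarrow> (nat \<Rightarrow> nat set) \<Rightarrow> (nat \<Rightarrow> nat) set" where
  "block_chains a b V = (\<Pi>\<^sub>E s\<in>{a..b}. V s)"

definition is_tiling :: "(nat \<Rightarrow> nat) \<Rightarrow> nat \<Rightarrow> nat \<Rightarrow> (nat \<Rightarrow> nat set) set \<Rightarrow> bool" where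
  "is_tiling F a b T \<longleftrightarrow>
     finite T \<and> (\<forall>V\<in>T. is_block F a b V) \<and>
     (\<forall>V\<in>T. \<forall>W\<in>T. V \<noteq> W \<longrightarrow> block_chains a b V \<inter> block_chains a b W = {}) \<and>
     (\<Union>V\<in>T. block_chains a b V) = layer_max_chains F a b"

end

theory Submission
  imports Defs "HOL-Library.Disjoint_Sets"
begin

(* The layer <Phi_(k+1) -> Phi_n> is the product of level sets of sizes
   F(k+1), ..., F(n).  We prove a more general statement by a double induction:
   a product over an index set D whose factors have sizes F(k + e s), where e is
   a bijection from D onto {1..m}, can be tiled by "sized blocks", i.e. subproducts
   whose factor sizes are F(1), ..., F(m) in some order.  The only property of F
   used is the addition law
     F(k + m + 1) = F(k + 1) F(m + 1) + F(k) F(m).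
   Induction step: pick the factor t of largest size F(k+1 + m+1) and split it into
   F(k+2) parts of size F(m+1) and F(m) parts of size F(k+1).  Products with a part
   of the first kind are tiled by induction on m (t becomes the level of size F(m+1)),
   those with a part of the second kind by induction on k (t becomes the level of
   size F(1) after shifting k down by one). *)

lemma Fq_add: "Fq q (k + Suc m) = Fq q (Suc k) * Fq q (Suc m) + Fq q k * Fq q m"
proof (induction k arbitrary: m)
  case 0 then show ?case by simp
next
  case (Suc k)
  have "Fq q (Suc k + Suc m) = Fq q (k + Suc (Suc m))" by simp
  also have "\<dots> = Fq q (Suc k) * Fq q (Suc (Suc m)) + Fq q k * Fq q (Suc m)" by (rule Suc.IH)
  also have "\<dots> = Fq q (Suc (Suc k)) * Fq q (Suc m) + Fq q (Suc k) * Fq q m"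
    by (simp add: algebra_simps)
  finally show ?case .
qed

lemma bij_remove_top:
  assumes "bij_betw e D {1..Suc m}"
  shows "\<exists>t\<in>D. e t = Suc m \<and> bij_betw e (D - {t}) {1..m}"
proof -
  have "Suc m \<in> e ` D" using assms by (simp add: bij_betw_def)
  then obtain t where t: "t \<in> D" "e t = Suc m" by (metis imageE)
  have "bij_betw e (D - {t}) ({1..Suc m} - {Suc m})"
    using bij_betw_DiffI[OF assms, of "{t}" "{Suc m}"] t by simp
  then show ?thesis using t by (auto simp: atLeastAtMostSuc_conv)
qed

lemma bij_prepend:
  assumes "t \<in> D" "bij_betw e (D - {t}) {1..m}"
  shows "bij_betw (\<lambda>s. if s = t then 1 else Suc (e s)) D {1..Suc m}"
proof -
  let ?e' = "\<lambda>s. if s = t then 1 else Suc (e s)"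
  have "bij_betw (Suc \<circ> e) (D - {t}) (Suc ` {1..m})"
    using assms(2) by (rule bij_betw_trans) (simp add: bij_betw_def)
  moreover have "bij_betw ?e' (D - {t}) (Suc ` {1..m}) \<longleftrightarrow> bij_betw (Suc \<circ> e) (D - {t}) (Suc ` {1..m})"
    by (rule bij_betw_cong) simp
  ultimately have "bij_betw ?e' (D - {t}) (Suc ` {1..m})" by simp
  then have "bij_betw ?e' ((D - {t}) \<union> {t}) (Suc ` {1..m} \<union> {?e' t})"
    by (intro notIn_Un_bij_betw) auto
  moreover have "(D - {t}) \<union> {t} = D" "Suc ` {1..m} \<union> {?e' t} = {1..Suc m}"
    using assms(1) by auto
  ultimately show ?thesis by simp
qed

lemma bij_append:
  assumes "t \<notin> D" "bij_betw g D {1..m}"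
  shows "bij_betw (g(t := Suc m)) (insert t D) {1..Suc m}"
proof -
  have "bij_betw (g(t := Suc m)) D {1..m} \<longleftrightarrow> bij_betw g D {1..m}"
    by (rule bij_betw_cong) (use assms(1) in auto)
  then have "bij_betw (g(t := Suc m)) D {1..m}" using assms(2) by simp
  then have "bij_betw (g(t := Suc m)) (D \<union> {t}) ({1..m} \<union> {(g(t := Suc m)) t})"
    using assms(1) by (intro notIn_Un_bij_betw) auto
  moreover have "D \<union> {t} = insert t D" "{1..m} \<union> {(g(t := Suc m)) t} = {1..Suc m}" by auto
  ultimately show ?thesis by simp
qed

lemma partition_by_cards:
  fixes n :: nat and c :: "nat \<Rightarrow> nat"
  assumes "finite S" "card S = (\<Sum>i<n. c i)"
  shows "\<exists>P. (\<forall>i<n. P i \<subseteq> S \<and> card (P i) = c i) \<and> disjoint_family_on P {..<n} \<and> (\<Union>i<n. P i) = S"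
  using assms
proof (induction n arbitrary: S)
  case 0 then show ?case by (auto simp: disjoint_family_on_def)
next
  case (Suc n)
  obtain B where B: "B \<subseteq> S" "card B = c n"
    using Suc.prems obtain_subset_with_card_n[of "c n" S] by auto
  have "card (S - B) = (\<Sum>i<n. c i)"
    using Suc.prems B by (simp add: card_Diff_subset finite_subset)
  then obtain P where P: "\<forall>i<n. P i \<subseteq> S - B \<and> card (P i) = c i"
      "disjoint_family_on P {..<n}" "(\<Union>i<n. P i) = S - B"
    using Suc.IH[of "S - B"] Suc.prems by auto
  have "\<forall>i<Suc n. (P(n:=B)) i \<subseteq> S \<and> card ((P(n:=B)) i) = c i"
    using P(1) B by (auto simp: less_Suc_eq)
  moreover have "disjoint_family_on (P(n:=B)) {..<Suc n}"
    unfolding disjoint_family_on_def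
  proof (intro ballI impI)
    fix i j assume "i \<in> {..<Suc n}" "j \<in> {..<Suc n}" "i \<noteq> j"
    then show "(P(n:=B)) i \<inter> (P(n:=B)) j = {}"
      using P(1) disjoint_family_onD[OF P(2), of i j] by (auto simp: less_Suc_eq)
  qed
  moreover have "(\<Union>i<Suc n. (P(n:=B)) i) = S"
    using P(3) B by (auto simp: lessThan_Suc)
  ultimately show ?case by blast
qed

lemma sum_two_values: "(\<Sum>i<a + b. if i < a then x else y) = a * x + b * (y::nat)"
  by (induction b) auto

definition sized_block :: "(nat \<Rightarrow> nat) \<Rightarrow> 'i set \<Rightarrow> nat \<Rightarrow> ('i \<Rightarrow> 'a set) \<Rightarrow> bool" where
  "sized_block F D m V \<longleftrightarrow> (\<exists>g. bij_betw g D {1..m} \<and> (\<forall>s\<in>D. card (V s) = F (g s)))"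

definition tiling_of ::
    "(nat \<Rightarrow> nat) \<Rightarrow> 'i set \<Rightarrow> nat \<Rightarrow> ('i \<Rightarrow> 'a set) \<Rightarrow> ('i \<Rightarrow> 'a set) set \<Rightarrow> bool" where
  "tiling_of F D m A T \<longleftrightarrow> finite T \<and> (\<forall>V\<in>T. sized_block F D m V \<and> (\<forall>s\<in>D. V s \<subseteq> A s)) \<and>
     disjoint_family_on (PiE D) T \<and> (\<Union>V\<in>T. PiE D V) = PiE D A"

lemma tiling_of_single: "sized_block F D m A \<Longrightarrow> tiling_of F D m A {A}"
  unfolding tiling_of_def disjoint_family_on_def by auto

lemma PiE_upd_cover:
  assumes "t \<in> D" "(\<Union>i\<in>I. B i) = A t"
  shows "(\<Union>i\<in>I. PiE D (A(t := B i))) = PiE D A"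
proof (intro equalityI subsetI)
  fix x assume "x \<in> (\<Union>i\<in>I. PiE D (A(t := B i)))"
  then obtain i where i: "i \<in> I" and x: "x \<in> PiE D (A(t := B i))" by blast
  have "x s \<in> A s" if "s \<in> D" for s
    using PiE_mem[OF x that] i assms(2) by (cases "s = t") auto
  then show "x \<in> PiE D A" using x by (auto simp: PiE_iff)
next
  fix x assume x: "x \<in> PiE D A"
  then obtain i where "i \<in> I" "x t \<in> B i" using assms by (auto simp: PiE_iff)
  then show "x \<in> (\<Union>i\<in>I. PiE D (A(t := B i)))" using x by (auto simp: PiE_iff)
qed

lemma tiling_of_split:
  assumes t: "t \<in> D" and I: "finite I" and disj: "disjoint_family_on B I"
    and cover: "(\<Union>i\<in>I. B i) = A t"
    and tiled: "\<And>i. i \<in> I \<Longrightarrow> tiling_of F D m (A(t := B i)) (T i)"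
  shows "tiling_of F D m A (\<Union>i\<in>I. T i)"
proof -
  have at_t: "x t \<in> B i" if "i \<in> I" "V \<in> T i" "x \<in> PiE D V" for i V x
  proof -
    have "x \<in> PiE D (A(t := B i))" using tiled[OF that(1)] that(2,3) unfolding tiling_of_def by blast
    then show ?thesis using t by (auto simp: PiE_iff)
  qed
  have "disjoint_family_on (PiE D) (\<Union>i\<in>I. T i)"
    unfolding disjoint_family_on_def
  proof (intro ballI impI)
    fix V W assume "V \<in> (\<Union>i\<in>I. T i)" "W \<in> (\<Union>i\<in>I. T i)" "V \<noteq> W"
    then obtain i j where i: "i \<in> I" "V \<in> T i" and j: "j \<in> I" "W \<in> T j" by auto
    show "PiE D V \<inter> PiE D W = {}"
    proof (cases "i = j")
      case True then show ?thesis
        using tiled[OF i(1)] i j \<open>V \<noteq> W\<close> unfolding tiling_of_def disjoint_family_on_def by blast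
    next
      case False then show ?thesis
        using at_t[OF i] at_t[OF j] disjoint_family_onD[OF disj i(1) j(1)] by blast
    qed
  qed
  moreover have "(\<Union>V\<in>(\<Union>i\<in>I. T i). PiE D V) = PiE D A"
  proof -
    have "(\<Union>V\<in>(\<Union>i\<in>I. T i). PiE D V) = (\<Union>i\<in>I. PiE D (A(t := B i)))"
      using tiled unfolding tiling_of_def by auto
    then show ?thesis using PiE_upd_cover[of t D B I A, OF t cover] by simp
  qed
  moreover have "\<forall>V\<in>(\<Union>i\<in>I. T i). sized_block F D m V \<and> (\<forall>s\<in>D. V s \<subseteq> A s)"
    using tiled cover unfolding tiling_of_def by (fastforce split: if_splits)
  ultimately show ?thesis
    using I tiled unfolding tiling_of_def by auto
qed

lemma PiE_insert_upd_iff: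
  assumes "t \<notin> D"
  shows "x \<in> PiE (insert t D) (A(t := C)) \<longleftrightarrow> x t \<in> C \<and> x(t := undefined) \<in> PiE D A"
  using assms by (auto simp: PiE_iff extensional_def)

lemma PiE_insert_upd_cover:
  assumes t: "t \<notin> D" and cover: "(\<Union>V\<in>T. PiE D V) = PiE D A"
  shows "(\<Union>V'\<in>(\<lambda>V. V(t := C)) ` T. PiE (insert t D) V') = PiE (insert t D) (A(t := C))"
proof (intro equalityI subsetI)
  fix x assume "x \<in> (\<Union>V'\<in>(\<lambda>V. V(t := C)) ` T. PiE (insert t D) V')"
  then obtain V where "V \<in> T" "x \<in> PiE (insert t D) (V(t := C))" by blast
  then have "x t \<in> C" "x(t := undefined) \<in> PiE D A"
    using cover by (auto simp: PiE_insert_upd_iff[OF t])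
  then show "x \<in> PiE (insert t D) (A(t := C))" by (simp add: PiE_insert_upd_iff[OF t])
next
  fix x assume "x \<in> PiE (insert t D) (A(t := C))"
  then have "x t \<in> C" "x(t := undefined) \<in> (\<Union>V\<in>T. PiE D V)"
    using cover by (auto simp: PiE_insert_upd_iff[OF t])
  then obtain V where "V \<in> T" "x \<in> PiE (insert t D) (V(t := C))"
    by (auto simp: PiE_insert_upd_iff[OF t])
  then show "x \<in> (\<Union>V'\<in>(\<lambda>V. V(t := C)) ` T. PiE (insert t D) V')" by blast
qed

lemma tiling_of_extend:
  assumes t: "t \<notin> D" and T: "tiling_of F D m A T" and C: "card C = F (Suc m)"
  shows "tiling_of F (insert t D) (Suc m) (A(t := C)) ((\<lambda>V. V(t := C)) ` T)"
proof -
  have cover: "(\<Union>V\<in>T. PiE D V) = PiE D A" and disj: "disjoint_family_on (PiE D) T"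
      and sub: "\<forall>V\<in>T. \<forall>s\<in>D. V s \<subseteq> A s" and fin: "finite T"
    using T unfolding tiling_of_def by auto
  have blocks: "sized_block F (insert t D) (Suc m) (V(t := C))" if "V \<in> T" for V
  proof -
    obtain g where g: "bij_betw g D {1..m}" "\<forall>s\<in>D. card (V s) = F (g s)"
      using T \<open>V \<in> T\<close> unfolding tiling_of_def sized_block_def by blast
    have "bij_betw (g(t := Suc m)) (insert t D) {1..Suc m}" by (rule bij_append[OF t g(1)])
    moreover have "\<forall>s\<in>insert t D. card ((V(t := C)) s) = F ((g(t := Suc m)) s)"
      using g(2) t C by auto
    ultimately show ?thesis unfolding sized_block_def by blast
  qed
  have disj': "disjoint_family_on (PiE (insert t D)) ((\<lambda>V. V(t := C)) ` T)"
    unfolding disjoint_family_on_def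
  proof (intro ballI impI)
    fix V' W' assume "V' \<in> (\<lambda>V. V(t := C)) ` T" "W' \<in> (\<lambda>V. V(t := C)) ` T" "V' \<noteq> W'"
    then obtain V W where VW: "V \<in> T" "W \<in> T" "V \<noteq> W" "V' = V(t := C)" "W' = W(t := C)" by auto
    show "PiE (insert t D) V' \<inter> PiE (insert t D) W' = {}"
    proof (rule equals0I)
      fix x assume "x \<in> PiE (insert t D) V' \<inter> PiE (insert t D) W'"
      then have "x(t := undefined) \<in> PiE D V \<inter> PiE D W"
        using VW(4,5) by (simp add: PiE_insert_upd_iff[OF t])
      then show False using disjoint_family_onD[OF disj VW(1-3)] by simp
    qed
  qed
  have cover': "(\<Union>V'\<in>(\<lambda>V. V(t := C)) ` T. PiE (insert t D) V') = PiE (insert t D) (A(t := C))"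
    by (rule PiE_insert_upd_cover[OF t cover])
  show ?thesis
    unfolding tiling_of_def using fin blocks sub disj' cover' by auto
qed

lemma tiling_step:
  fixes F :: "nat \<Rightarrow> nat" and A :: "'i \<Rightarrow> 'a set"
  assumes add_law: "F (Suc k + Suc m) = F (Suc (Suc k)) * F (Suc m) + F (Suc k) * F m"
    and IH_k: "\<And>D' e' (A' :: 'i \<Rightarrow> 'a set). bij_betw e' D' {1..Suc m} \<Longrightarrow>
      \<forall>s\<in>D'. finite (A' s) \<and> card (A' s) = F (k + e' s) \<Longrightarrow> \<exists>T. tiling_of F D' (Suc m) A' T"
    and IH_m: "\<And>D' e' (A' :: 'i \<Rightarrow> 'a set). bij_betw e' D' {1..m} \<Longrightarrow>
      \<forall>s\<in>D'. finite (A' s) \<and> card (A' s) = F (Suc k + e' s) \<Longrightarrow> \<exists>T. tiling_of F D' m A' T"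
    and e: "bij_betw e D {1..Suc m}"
    and sizes: "\<forall>s\<in>D. finite (A s) \<and> card (A s) = F (Suc k + e s)"
  shows "\<exists>T. tiling_of F D (Suc m) A T"
proof -
  obtain t where t: "t \<in> D" "e t = Suc m" and e_rest: "bij_betw e (D - {t}) {1..m}"
    using bij_remove_top[OF e] by blast
  define n1 where "n1 = F (Suc (Suc k))"
  define c where "c i = (if i < n1 then F (Suc m) else F (Suc k))" for i
  have card_t: "card (A t) = (\<Sum>i<n1 + F m. c i)"
    using sizes t add_law unfolding c_def n1_def sum_two_values by (simp add: mult.commute)
  have "finite (A t)" using sizes t(1) by blast
  from partition_by_cards[OF this card_t] obtain P where
    P: "\<forall>i<n1 + F m. P i \<subseteq> A t \<and> card (P i) = c i"
      "disjoint_family_on P {..<n1 + F m}" "(\<Union>i<n1 + F m. P i) = A t"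
    by blast
  have "\<exists>T. tiling_of F D (Suc m) (A(t := P i)) T" if i: "i < n1 + F m" for i
  proof (cases "i < n1")
    case True
    obtain T where "tiling_of F (D - {t}) m A T"
      using IH_m[OF e_rest] sizes by auto
    from tiling_of_extend[OF _ this, of t "P i"]
    have "tiling_of F D (Suc m) (A(t := P i)) ((\<lambda>V. V(t := P i)) ` T)"
      using P(1) i True t(1) by (simp add: c_def insert_absorb)
    then show ?thesis ..
  next
    case False
    let ?e' = "\<lambda>s. if s = t then 1 else Suc (e s)"
    have "\<forall>s\<in>D. finite ((A(t := P i)) s) \<and> card ((A(t := P i)) s) = F (k + ?e' s)"
      using P(1) i False sizes t(1) finite_subset[of "P i" "A t"] by (auto simp: c_def)
    then show ?thesis using IH_k[OF bij_prepend[OF t(1) e_rest]] by blast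
  qed
  then have "\<forall>i\<in>{..<n1 + F m}. \<exists>T. tiling_of F D (Suc m) (A(t := P i)) T" by simp
  from bchoice[OF this] obtain TT
    where "\<And>i. i \<in> {..<n1 + F m} \<Longrightarrow> tiling_of F D (Suc m) (A(t := P i)) (TT i)" by blast
  from tiling_of_split[OF t(1) finite_lessThan P(2,3) this] show ?thesis by blast
qed

lemma tiling_exists:
  fixes F :: "nat \<Rightarrow> nat" and A :: "'i \<Rightarrow> 'a set"
  assumes add_law: "\<And>k m. F (k + Suc m) = F (Suc k) * F (Suc m) + F k * F m"
  shows "bij_betw e D {1..m} \<Longrightarrow> \<forall>s\<in>D. finite (A s) \<and> card (A s) = F (k + e s) \<Longrightarrow>
    \<exists>T. tiling_of F D m A T"
proof (induction k arbitrary: m D e A)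
  case 0
  then have "sized_block F D m A" unfolding sized_block_def by auto
  then show ?case by (blast intro: tiling_of_single)
next
  case (Suc k)
  note IH_k = Suc.IH
  from Suc.prems show ?case
  proof (induction m arbitrary: D e A)
    case 0
    then have "D = {}" by (auto simp: bij_betw_def)
    then have "sized_block F D 0 A" using 0 unfolding sized_block_def by auto
    then show ?case by (blast intro: tiling_of_single)
  next
    case (Suc m)
    show ?case by (rule tiling_step[OF add_law IH_k Suc.IH Suc.prems])
  qed
qed

lemma level_renumbering:
  fixes a b :: nat
  assumes "1 \<le> a" "a \<le> b"
  shows "bij_betw (\<lambda>s. s - (a - 1)) {a..b} {1..b - a + 1}"
    and "bij_betw (\<lambda>i. a - 1 + i) {1..b - a + 1} {a..b}"
proof -
  have inv: "\<forall>s\<in>{a..b}. a - 1 + (s - (a - 1)) = s" "\<forall>i\<in>{1..b - a + 1}. a - 1 + i - (a - 1) = i"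
    and img: "(\<lambda>s. s - (a - 1)) ` {a..b} \<subseteq> {1..b - a + 1}" "(\<lambda>i. a - 1 + i) ` {1..b - a + 1} \<subseteq> {a..b}"
    using assms by (auto simp: image_subset_iff)
  show "bij_betw (\<lambda>s. s - (a - 1)) {a..b} {1..b - a + 1}" by (rule bij_betw_byWitness[OF inv img])
  show "bij_betw (\<lambda>i. a - 1 + i) {1..b - a + 1} {a..b}"
    by (rule bij_betw_byWitness[OF inv(2,1) img(2,1)])
qed

text \<open>A sized block over the levels a..b, contained in the layer, is a block of type
  \<sigma> P_m: the permutation \<sigma> is the level numbering g read through i \<mapsto> a - 1 + i.\<close>

lemma is_block_of_sized_block:
  assumes ab: "1 \<le> a" "a \<le> b" and V: "sized_block F {a..b} (b - a + 1) V"
    and sub: "\<forall>s\<in>{a..b}. V s \<subseteq> cobweb_level F s"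
  shows "is_block F a b V"
proof -
  let ?m = "b - a + 1"
  obtain g where g: "bij_betw g {a..b} {1..?m}" "\<forall>s\<in>{a..b}. card (V s) = F (g s)"
    using V unfolding sized_block_def by blast
  define \<sigma> where "\<sigma> i = (if i \<in> {1..?m} then g (a - 1 + i) else i)" for i
  have "bij_betw \<sigma> {1..?m} {1..?m} \<longleftrightarrow> bij_betw (g \<circ> (\<lambda>i. a - 1 + i)) {1..?m} {1..?m}"
    by (rule bij_betw_cong) (simp add: \<sigma>_def)
  then have "bij_betw \<sigma> {1..?m} {1..?m}" using bij_betw_trans[OF level_renumbering(2)[OF ab] g(1)] by simp
  then have "\<sigma> permutes {1..?m}" by (rule bij_imp_permutes) (auto simp: \<sigma>_def)
  moreover have "\<forall>i\<in>{1..?m}. V (a - 1 + i) \<subseteq> cobweb_level F (a - 1 + i) \<and>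
      card (V (a - 1 + i)) = F (\<sigma> i)"
  proof
    fix i assume i: "i \<in> {1..?m}"
    then have "a - 1 + i \<in> {a..b}" using ab by auto
    then show "V (a - 1 + i) \<subseteq> cobweb_level F (a - 1 + i) \<and> card (V (a - 1 + i)) = F (\<sigma> i)"
      using g(2) sub i by (simp add: \<sigma>_def)
  qed
  ultimately show ?thesis unfolding is_block_def by blast
qed

lemma is_tiling_of_tiling_of:
  assumes ab: "1 \<le> a" "a \<le> b" and T: "tiling_of F {a..b} (b - a + 1) (cobweb_level F) T"
  shows "is_tiling F a b T"
proof -
  have chains: "block_chains a b = PiE {a..b}" by (simp add: fun_eq_iff block_chains_def)
  have "\<forall>V\<in>T. is_block F a b V"
  proof
    fix V assume "V \<in> T"
    then have "sized_block F {a..b} (b - a + 1) V" "\<forall>s\<in>{a..b}. V s \<subseteq> cobweb_level F s"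
      using T unfolding tiling_of_def by simp_all
    then show "is_block F a b V" by (rule is_block_of_sized_block[OF ab])
  qed
  moreover have "finite T" "disjoint_family_on (PiE {a..b}) T"
    "(\<Union>V\<in>T. PiE {a..b} V) = PiE {a..b} (cobweb_level F)"
    using T unfolding tiling_of_def by simp_all
  ultimately show ?thesis
    unfolding is_tiling_def chains layer_max_chains_def disjoint_family_on_def by simp
qed

theorem mainTheorem8:
  fixes q k n :: nat
  assumes "q \<ge> 1" and "k < n"
  shows "\<exists>T. is_tiling (Fq q) (k + 1) n T"
proof -
  have range: "1 \<le> k + 1" "k + 1 \<le> n" using assms(2) by simp_all
  have "\<forall>s\<in>{k + 1..n}. finite (cobweb_level (Fq q) s) \<and>
      card (cobweb_level (Fq q) s) = Fq q (k + (s - (k + 1 - 1)))"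
    unfolding cobweb_level_def by simp
  from tiling_exists[OF Fq_add[of q] level_renumbering(1)[OF range] this] obtain T
    where "tiling_of (Fq q) {k + 1..n} (n - (k + 1) + 1) (cobweb_level (Fq q)) T" ..
  then have "is_tiling (Fq q) (k + 1) n T" by (rule is_tiling_of_tiling_of[OF range])
  then show ?thesis ..
qed

end
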